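(* Let $n\ge 2$, $m\ge 1$, let $V=\{v_1,\dots,v_m\}\subset H$ be data points, where $H=\{x\in\mathbb{R}^n : x_1+\cdots+x_n=0\}$ is identified with the tropical projective torus $\mathbb{R}^n/\mathbb{R}\mathbf{1}_n$. Let $w_1,\dots,w_m$ be any positive real weights. Then the weighted Fermat–Weber set $$\mathrm{FW}(V,w)=\operatorname{argmin}_{x\in H}\sum_{i=1}^m w_i\, d_\Delta(x,v_i)$$ is contained in the min-tropical convex hull $\mathrm{tconv}(V)$. More precisely, $\mathrm{FW}(V,w)$ is a covector cell of $\mathrm{tconv}(V)$. Furthermore, for every covector cell $P$ of $\mathrm{tconv}(V)$ there exist positive real weights $w_1,\dots,w_m$ such that $\mathrm{FW}(V,w)=P$.
   Context: $\mathbf{1}_n$ is the all-ones vector in $\mathbb{R}^n$; every class in $\mathbb{R}^n/\mathbb{R}\mathbf{1}_n$ has a unique representative in $H$, and points are given by these representatives. Write $v_i=(v_{i1},\dots,v_{in})$. The asymmetric tropical distance is, for $x,y\in H$, $d_\Delta(x,y)=n\max_{j\in[n]}(x_j-y_j)$ (for arbitrary representatives in $\mathbb{R}^n$ it is $n\max_j(x_j-y_j)+\sum_j(y_j-x_j)$). The min-tropical convex hull is $\mathrm{tconv}(V)=\{\min(\lambda_1\mathbf{1}_n+v_1,\dots,\lambda_m\mathbf{1}_n+v_m) : \lambda\in\mathbb{R}^m\}$ (coordinatewise minimum), taken modulo $\mathbb{R}\mathbf{1}_n$ and represented in $H$. Covector decomposition: for $x\in H$ and $i\in[m]$ let $S_i(x)=\{j\in[n]: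 x_j-v_{ij}=\max_{k}(x_k-v_{ik})\}$. For a tuple $S=(S_1,\dots,S_m)$ of nonempty subsets of $[n]$ put $C_S=\{x\in H : S_i\subseteq S_i(x)\text{ for all } i\}$. The nonempty sets $C_S$ are closed polyhedra forming a polyhedral complex (the covector decomposition of $H$ induced by $V$, i.e. the subdivision induced by the max-tropical hyperplanes centered at $v_1,\dots,v_m$); its cells are called covector cells. The covector cells of $\mathrm{tconv}(V)$ are the bounded covector cells; their union is $\mathrm{tconv}(V)$. *)

theory Defs
  imports "HOL-Analysis.Analysis"
begin

text \<open>Points of R^n are vectors real^'n (n = CARD('n)); data points are indexed by a
finite type 'm (m = CARD('m) \<ge> 1 automatically).\<close>

definition Hspace :: "(real^'n) set" where
  "Hspace = {x. (\<Sum>j\<in>UNIV. x $ j) = 0}"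

text \<open>Asymmetric tropical distance, for representatives in H.\<close>
definition dDelta :: "real^'n \<Rightarrow> real^'n \<Rightarrow> real" where
  "dDelta x y = real CARD('n) * Max (range (\<lambda>j. x $ j - y $ j))"

text \<open>Canonical representative in H of the class of y modulo R 1.\<close>
definition projH :: "real^'n \<Rightarrow> real^'n" where
  "projH y = (\<chi> j. y $ j - (\<Sum>k\<in>UNIV. y $ k) / real CARD('n))"

definition tconv :: "('m::finite \<Rightarrow> real^'n) \<Rightarrow> (real^'n) set" where
  "tconv v = {projH (\<chi> j. Min (range (\<lambda>i. lam i + v i $ j))) | lam. True}"

definition covec :: "('m \<Rightarrow> real^'n) \<Rightarrow> real^'n \<Rightarrow> 'm \<Rightarrow> 'n set" where
  "covec v x i = {j. x $ j - v i $ j = Max (range (\<lambda>k. x $ k - v i $ k))}"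

definition cellC :: "('m \<Rightarrow> real^'n) \<Rightarrow> ('m \<Rightarrow> 'n set) \<Rightarrow> (real^'n) set" where
  "cellC v S = {x \<in> Hspace. \<forall>i. S i \<subseteq> covec v x i}"

definition covector_cell :: "('m \<Rightarrow> real^'n) \<Rightarrow> (real^'n) set \<Rightarrow> bool" where
  "covector_cell v P \<longleftrightarrow> (\<exists>S. (\<forall>i. S i \<noteq> {}) \<and> P = cellC v S \<and> P \<noteq> {})"

text \<open>Covector cells of tconv(V): the bounded covector cells.\<close>
definition tconv_cell :: "('m \<Rightarrow> real^'n) \<Rightarrow> (real^'n) set \<Rightarrow> bool" where
  "tconv_cell v P \<longleftrightarrow> covector_cell v P \<and> bounded P"

definition FW :: "('m::finite \<Rightarrow> real^'n) \<Rightarrow> ('m \<Rightarrow> real) \<Rightarrow> (real^'n) set" where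
  "FW v w = {x \<in> Hspace. \<forall>y\<in>Hspace.
      (\<Sum>i\<in>UNIV. w i * dDelta x (v i)) \<le> (\<Sum>i\<in>UNIV. w i * dDelta y (v i))}"

end

theory Submission
  imports Defs
begin

text \<open>Up to the factor \<open>n\<close>, the Fermat-Weber cost is \<open>\<Sum>\<^sub>i w\<^sub>i max\<^sub>k (x\<^sub>k - v\<^sub>i\<^sub>k)\<close>:
  convex, piecewise linear and coercive on H, so its minimisers form a nonempty compact convex set.
  At the midpoint of two minimisers every term must be affine, so a minimiser with the fewest
  tight coordinates has a covector contained in that of every other minimiser; the cost is affine
  on its covector cell, which extends slightly beyond it, so the whole cell consists of
  minimisers. A bounded cell uses every coordinate in its covector, which puts it inside tconv(V).
  Conversely, for a bounded cell \<open>C\<^sub>S\<close> every coordinate \<open>j\<close> lies in some \<open>S\<^sub>i\<close>; spreading unit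
  mass over these gives multipliers \<open>p\<^sub>i\<^sub>j \<ge> 0\<close> with equal column sums, and for
  \<open>w\<^sub>i = \<Sum>\<^sub>j p\<^sub>i\<^sub>j\<close> the cost on H is a constant plus the complementary slackness term
  \<open>\<Sum>\<^sub>i\<^sub>j p\<^sub>i\<^sub>j (max\<^sub>k (x\<^sub>k - v\<^sub>i\<^sub>k) - (x\<^sub>j - v\<^sub>i\<^sub>j)) \<ge> 0\<close>, which vanishes exactly on \<open>C\<^sub>S\<close>.\<close>

section \<open>Maximal coordinate difference\<close>

definition maxdiff :: "real^'n \<Rightarrow> real^'n \<Rightarrow> real" where
  "maxdiff x y = Max (range (\<lambda>k. x $ k - y $ k))"

lemma maxdiff_ge: "x $ k - y $ k \<le> maxdiff x y"
  unfolding maxdiff_def by (rule Max_ge) auto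

lemma maxdiff_attained: obtains k where "x $ k - y $ k = maxdiff x y"
proof -
  have "maxdiff x y \<in> range (\<lambda>k. x $ k - y $ k)"
    unfolding maxdiff_def by (rule Max_in) auto
  then show ?thesis using that by auto
qed

lemma maxdiff_triangle: "maxdiff x z \<le> maxdiff x y + maxdiff y z"
proof -
  obtain k where "x $ k - z $ k = maxdiff x z" by (rule maxdiff_attained)
  then show ?thesis using maxdiff_ge[of x k y] maxdiff_ge[of y k z] by linarith
qed

lemma maxdiff_le_norm: "maxdiff x y \<le> norm (x - y)"
proof -
  obtain k where "x $ k - y $ k = maxdiff x y" by (rule maxdiff_attained)
  then show ?thesis using component_le_norm_cart[of "x - y" k] by simp
qed

lemma continuous_on_maxdiff: "continuous_on UNIV (\<lambda>x. maxdiff x (y::real^'n))"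
proof (rule lipschitz_on_continuous_on)
  show "1-lipschitz_on UNIV (\<lambda>x. maxdiff x y)"
  proof (rule lipschitz_onI)
    fix x x' :: "real^'n"
    show "dist (maxdiff x y) (maxdiff x' y) \<le> 1 * dist x x'"
      using maxdiff_triangle[of x y x'] maxdiff_triangle[of x' y x]
        maxdiff_le_norm[of x x'] maxdiff_le_norm[of x' x] norm_minus_commute[of x x']
      by (simp add: dist_real_def dist_norm abs_le_iff)
  qed simp
qed

lemma dDelta_eq_maxdiff: "dDelta x y = real CARD('n) * maxdiff (x::real^'n) y"
  unfolding dDelta_def maxdiff_def by simp

lemma mem_Hspace_iff: "x \<in> Hspace \<longleftrightarrow> (\<Sum>j\<in>UNIV. x $ j) = 0"
  unfolding Hspace_def by simp

lemma closed_Hspace: "closed Hspace"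
  unfolding Hspace_def by (intro closed_Collect_eq continuous_intros)

lemma maxdiff_zero_nonneg:
  fixes y :: "real^'n"
  assumes "y \<in> Hspace"
  shows "0 \<le> maxdiff y 0"
proof -
  have "y $ k \<le> maxdiff y 0" for k
    using maxdiff_ge[of y k 0] by simp
  then have "(\<Sum>k\<in>UNIV. y $ k) \<le> (\<Sum>k\<in>(UNIV::'n set). maxdiff y 0)"
    by (intro sum_mono)
  then show ?thesis using assms by (simp add: mem_Hspace_iff zero_le_mult_iff)
qed

text \<open>On H the positive parts of the coordinates carry half of the l1 norm.\<close>
lemma norm_le_maxdiff_zero:
  fixes y :: "real^'n"
  assumes "y \<in> Hspace"
  shows "norm y \<le> 2 * real CARD('n) * maxdiff y 0"
proof -
  have "norm y \<le> (\<Sum>k\<in>UNIV. \<bar>y $ k\<bar>)" by (rule norm_le_l1_cart)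
  also have "\<dots> = (\<Sum>k\<in>UNIV. 2 * max (y $ k) 0 - y $ k)"
    by (intro sum.cong) auto
  also have "\<dots> = 2 * (\<Sum>k\<in>UNIV. max (y $ k) 0)"
    using assms by (simp add: sum_subtractf sum_distrib_left mem_Hspace_iff)
  also have "\<dots> \<le> 2 * (\<Sum>k\<in>(UNIV::'n set). maxdiff y 0)"
    using maxdiff_zero_nonneg[OF assms] maxdiff_ge[of y _ 0]
    by (intro mult_left_mono sum_mono) (auto simp: max_def)
  finally show ?thesis by simp
qed

lemma mem_covec_iff: "j \<in> covec v x i \<longleftrightarrow> x $ j - v i $ j = maxdiff x (v i)"
  unfolding covec_def maxdiff_def by simp

lemma mem_covec_iff_le: "j \<in> covec v x i \<longleftrightarrow> (\<forall>k. x $ k - v i $ k \<le> x $ j - v i $ j)"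
proof -
  obtain k where "x $ k - v i $ k = maxdiff x (v i)" by (rule maxdiff_attained)
  then show ?thesis unfolding mem_covec_iff using maxdiff_ge[of x _ "v i"] by (metis order_antisym)
qed

lemma covec_nonempty: "covec v x i \<noteq> {}"
proof -
  obtain k where "x $ k - v i $ k = maxdiff x (v i)" by (rule maxdiff_attained)
  then show ?thesis unfolding mem_covec_iff[symmetric] by auto
qed

lemma eventually_covec_subset:
  fixes v :: "'m \<Rightarrow> real^'n"
  shows "\<forall>\<^sub>F x in nhds z. covec v x i \<subseteq> covec v z i"
proof -
  have "\<forall>\<^sub>F x in nhds z. k \<notin> covec v z i \<longrightarrow> k \<notin> covec v x i" for k
  proof (cases "k \<in> covec v z i")
    case False
    then obtain l where l: "z $ k - v i $ k < z $ l - v i $ l"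
      by (auto simp: mem_covec_iff_le not_le)
    have "open {x::real^'n. x $ k - v i $ k < x $ l - v i $ l}"
      by (intro open_Collect_less continuous_intros)
    then have "\<forall>\<^sub>F x in nhds z. x \<in> {x. x $ k - v i $ k < x $ l - v i $ l}"
      using l by (intro eventually_nhds_in_open) auto
    then show ?thesis by eventually_elim (auto simp: mem_covec_iff_le not_le)
  qed simp
  then have "\<forall>\<^sub>F x in nhds z. \<forall>k. k \<notin> covec v z i \<longrightarrow> k \<notin> covec v x i"
    by (rule eventually_all_finite)
  then show ?thesis by eventually_elim blast
qed

definition FW_cost :: "('m::finite \<Rightarrow> real^'n) \<Rightarrow> ('m \<Rightarrow> real) \<Rightarrow> real^'n \<Rightarrow> real" where
  "FW_cost v w x = (\<Sum>i\<in>UNIV. w i * maxdiff x (v i))"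

lemma FW_eq_argmin:
  fixes v :: "'m::finite \<Rightarrow> real^'n"
  shows "FW v w = {x \<in> Hspace. \<forall>y\<in>Hspace. FW_cost v w x \<le> FW_cost v w y}"
proof -
  have "(\<Sum>i\<in>UNIV. w i * dDelta x (v i)) = real CARD('n) * FW_cost v w x" for x :: "real^'n"
    unfolding FW_cost_def dDelta_eq_maxdiff by (simp add: sum_distrib_left algebra_simps)
  then show ?thesis unfolding FW_def by simp
qed

lemma FW_subset_Hspace: "FW v w \<subseteq> Hspace"
  unfolding FW_def by blast

lemma continuous_on_FW_cost: "continuous_on UNIV (FW_cost v w)"
  unfolding FW_cost_def by (intro continuous_on_sum continuous_on_mult_left continuous_on_maxdiff)

section \<open>Bounded covector cells\<close>

lemma not_bounded_if_ray:
  fixes d :: "'a::real_normed_vector"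
  assumes "d \<noteq> 0" and ray: "\<And>s. 0 \<le> s \<Longrightarrow> x + s *\<^sub>R d \<in> S"
  shows "\<not> bounded S"
proof
  assume "bounded S"
  then obtain B where B: "\<And>y. y \<in> S \<Longrightarrow> norm y \<le> B"
    by (auto simp: bounded_iff)
  define s where "s = (\<bar>B\<bar> + norm x + 1) / norm d"
  have s: "0 \<le> s" "s * norm d = \<bar>B\<bar> + norm x + 1"
    using assms(1) unfolding s_def by auto
  have "norm (s *\<^sub>R d) \<le> norm (x + s *\<^sub>R d) + norm x"
    using norm_triangle_ineq4[of "x + s *\<^sub>R d" x] by simp
  also have "\<dots> \<le> B + norm x" using B[OF ray[OF s(1)]] by simp
  finally show False using s by simp
qed

lemma not_bounded_cellC_if_uncovered:
  fixes v :: "'m::finite \<Rightarrow> real^'n"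
  assumes "CARD('n) \<ge> 2" and x: "x \<in> cellC v T" and uncovered: "\<And>i. j \<notin> T i"
  shows "\<not> bounded (cellC v T)"
proof (rule not_bounded_if_ray)
  define N where "N = real CARD('n)"
  have N: "N \<ge> 2" using assms(1) unfolding N_def by simp
  text \<open>Lowering coordinate \<open>j\<close> and raising the others evenly keeps the point in H and
    preserves every maximum that is attained outside \<open>j\<close>.\<close>
  define d :: "real^'n" where "d = (\<chi> k. 1 / N - (if k = j then 1 else 0))"
  have "d $ j = 1 / N - 1" unfolding d_def by simp
  with N show "d \<noteq> 0" by auto
  fix s :: real assume s: "0 \<le> s"
  have xH: "x \<in> Hspace" and xT: "\<And>i. T i \<subseteq> covec v x i"
    using x unfolding cellC_def by auto
  have "(\<Sum>k\<in>UNIV. (x + s *\<^sub>R d) $ k) = (\<Sum>k\<in>UNIV. x $ k) + s * (\<Sum>k\<in>UNIV. d $ k)"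
    by (simp add: sum.distrib sum_distrib_left)
  moreover have "(\<Sum>k\<in>UNIV. d $ k) = 0"
    using N unfolding d_def N_def by (simp add: sum_subtractf)
  ultimately have "x + s *\<^sub>R d \<in> Hspace" using xH by (simp add: mem_Hspace_iff)
  moreover have "T i \<subseteq> covec v (x + s *\<^sub>R d) i" for i
  proof
    fix l assume l: "l \<in> T i"
    have "(x + s *\<^sub>R d) $ k \<le> x $ k + s / N" for k
      using s unfolding d_def by (simp add: algebra_simps)
    moreover have "(x + s *\<^sub>R d) $ l = x $ l + s / N"
      using l uncovered unfolding d_def by (auto simp: algebra_simps)
    moreover have "l \<in> covec v x i" using l xT by blast
    then have "x $ k - v i $ k \<le> x $ l - v i $ l" for k
      unfolding mem_covec_iff_le by blast
    ultimately show "l \<in> covec v (x + s *\<^sub>R d) i"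
      unfolding mem_covec_iff_le by (smt (verit))
  qed
  ultimately show "x + s *\<^sub>R d \<in> cellC v T" unfolding cellC_def by auto
qed

lemma bounded_cellC_covers:
  fixes v :: "'m::finite \<Rightarrow> real^'n"
  assumes "CARD('n) \<ge> 2" and "bounded (cellC v T)" and "cellC v T \<noteq> {}"
  shows "\<exists>i. j \<in> T i"
proof (rule ccontr)
  obtain x where "x \<in> cellC v T" using assms(3) by blast
  moreover assume "\<nexists>i. j \<in> T i"
  ultimately show False using not_bounded_cellC_if_uncovered[OF assms(1)] assms(2) by blast
qed

lemma mem_tconv_if_covered:
  fixes v :: "'m::finite \<Rightarrow> real^'n"
  assumes "x \<in> Hspace" and covered: "\<And>j. \<exists>i. j \<in> covec v x i"
  shows "x \<in> tconv v"
proof -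
  have "Min (range (\<lambda>i. maxdiff x (v i) + v i $ j)) = x $ j" for j
  proof (rule Min_eqI)
    show "x $ j \<le> y" if y: "y \<in> range (\<lambda>i. maxdiff x (v i) + v i $ j)" for y
    proof -
      obtain i where "y = maxdiff x (v i) + v i $ j" using y by blast
      then show ?thesis using maxdiff_ge[of x j "v i"] by simp
    qed
    obtain i where "j \<in> covec v x i" using covered by blast
    then have "x $ j = maxdiff x (v i) + v i $ j" by (simp add: mem_covec_iff)
    then show "x $ j \<in> range (\<lambda>i. maxdiff x (v i) + v i $ j)" by (rule range_eqI)
  qed simp
  then have "(\<chi> j. Min (range (\<lambda>i. maxdiff x (v i) + v i $ j))) = x"
    by (simp add: vec_eq_iff)
  moreover have "projH x = x"
    using assms(1) unfolding projH_def mem_Hspace_iff by (simp add: vec_eq_iff)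
  ultimately have "x = projH (\<chi> j. Min (range (\<lambda>i. maxdiff x (v i) + v i $ j)))"
    by simp
  then show ?thesis unfolding tconv_def by (intro CollectI exI[of _ "\<lambda>i. maxdiff x (v i)"]) simp
qed

section \<open>Weights realising a bounded cell\<close>

definition slack :: "('m::finite \<Rightarrow> real^'n) \<Rightarrow> ('m \<Rightarrow> 'n \<Rightarrow> real) \<Rightarrow> real^'n \<Rightarrow> real" where
  "slack v p y = (\<Sum>i\<in>UNIV. \<Sum>j\<in>UNIV. p i j * (maxdiff y (v i) - (y $ j - v i $ j)))"

lemma slack_nonneg: "(\<And>i j. 0 \<le> p i j) \<Longrightarrow> 0 \<le> slack v p y"
  unfolding slack_def by (intro sum_nonneg mult_nonneg_nonneg) (auto simp: maxdiff_ge)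

lemma slack_eq_0_iff:
  assumes "\<And>i j. 0 \<le> p i j"
  shows "slack v p y = 0 \<longleftrightarrow> (\<forall>i j. 0 < p i j \<longrightarrow> j \<in> covec v y i)"
proof -
  have "slack v p y = 0 \<longleftrightarrow> (\<forall>i j. p i j * (maxdiff y (v i) - (y $ j - v i $ j)) = 0)"
    unfolding slack_def using assms
    by (simp add: sum_nonneg_eq_0_iff sum_nonneg mult_nonneg_nonneg maxdiff_ge)
  also have "\<dots> \<longleftrightarrow> (\<forall>i j. 0 < p i j \<longrightarrow> j \<in> covec v y i)"
  proof -
    have "p i j * (maxdiff y (v i) - (y $ j - v i $ j)) = 0 \<longleftrightarrow> (0 < p i j \<longrightarrow> j \<in> covec v y i)"
      for i j using assms[of i j] by (auto simp: mem_covec_iff)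
    then show ?thesis by blast
  qed
  finally show ?thesis .
qed

text \<open>Nonnegative multipliers with constant column sums certify optimality: the term
  \<open>\<Sum>\<^sub>i\<^sub>j p i j * y $ j\<close> vanishes on H.\<close>
lemma FW_cost_eq_slack:
  assumes col: "\<And>j. (\<Sum>i\<in>UNIV. p i j) = c" and y: "y \<in> Hspace"
  shows "FW_cost v (\<lambda>i. \<Sum>j\<in>UNIV. p i j) y = slack v p y - (\<Sum>i\<in>UNIV. \<Sum>j\<in>UNIV. p i j * v i $ j)"
proof -
  have "(\<Sum>i\<in>UNIV. \<Sum>j\<in>UNIV. p i j * y $ j) = (\<Sum>j\<in>UNIV. (\<Sum>i\<in>UNIV. p i j) * y $ j)"
    by (subst sum.swap) (simp add: sum_distrib_right)
  also have "\<dots> = 0" using y by (simp add: col mem_Hspace_iff flip: sum_distrib_left)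
  finally have "(\<Sum>i\<in>UNIV. \<Sum>j\<in>UNIV. p i j * y $ j) = 0" .
  then show ?thesis
    unfolding slack_def FW_cost_def
    by (simp add: algebra_simps sum.distrib sum_subtractf sum_distrib_right)
qed

lemma FW_eq_slack_zero:
  assumes nonneg: "\<And>i j. 0 \<le> p i j" and col: "\<And>j. (\<Sum>i\<in>UNIV. p i j) = c"
    and x: "x \<in> Hspace" "slack v p x = 0"
  shows "FW v (\<lambda>i. \<Sum>j\<in>UNIV. p i j) = {y \<in> Hspace. slack v p y = 0}"
proof -
  have "(\<forall>z\<in>Hspace. slack v p y \<le> slack v p z) \<longleftrightarrow> slack v p y = 0" for y
  proof
    assume "\<forall>z\<in>Hspace. slack v p y \<le> slack v p z"
    then have "slack v p y \<le> 0" using x by force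
    moreover have "0 \<le> slack v p y" by (rule slack_nonneg[OF nonneg])
    ultimately show "slack v p y = 0" by linarith
  qed (simp add: slack_nonneg[OF nonneg])
  then show ?thesis unfolding FW_eq_argmin by (simp add: FW_cost_eq_slack[OF col] cong: conj_cong)
qed

lemma ex_weights_FW_eq_cellC:
  fixes v :: "'m::finite \<Rightarrow> real^'n"
  assumes nonempty: "\<And>i. S i \<noteq> {}" and covering: "\<And>j. \<exists>i. j \<in> S i"
    and "cellC v S \<noteq> {}"
  shows "\<exists>w. (\<forall>i. 0 < w i) \<and> FW v w = cellC v S"
proof -
  define p where "p i j = (if j \<in> S i then 1 / card {i. j \<in> S i} else 0)" for i j
  have nonneg: "0 \<le> p i j" for i j unfolding p_def by auto
  have pos_iff: "0 < p i j \<longleftrightarrow> j \<in> S i" for i j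
    using covering[of j] unfolding p_def by (auto simp: card_gt_0_iff)
  have col: "(\<Sum>i\<in>UNIV. p i j) = 1" for j
    using covering[of j] unfolding p_def by (simp add: sum.If_cases card_gt_0_iff)
  have cell: "cellC v S = {y \<in> Hspace. slack v p y = 0}"
    unfolding cellC_def slack_eq_0_iff[OF nonneg] pos_iff by blast
  obtain x where "x \<in> Hspace" "slack v p x = 0" using assms(3) unfolding cell by blast
  then have "FW v (\<lambda>i. \<Sum>j\<in>UNIV. p i j) = cellC v S"
    unfolding cell by (rule FW_eq_slack_zero[OF nonneg col])
  moreover have "0 < (\<Sum>j\<in>UNIV. p i j)" for i
  proof -
    obtain j where "j \<in> S i" using nonempty by blast
    then show ?thesis using nonneg pos_iff by (intro sum_pos2) auto
  qed
  ultimately show ?thesis by (intro exI[of _ "\<lambda>i. \<Sum>j\<in>UNIV. p i j"]) simp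
qed

lemma tconv_cell_eq_FW:
  fixes v :: "'m::finite \<Rightarrow> real^'n"
  assumes "CARD('n) \<ge> 2" and "tconv_cell v P"
  shows "\<exists>w. (\<forall>i. 0 < w i) \<and> FW v w = P"
proof -
  obtain S where "\<And>i. S i \<noteq> {}" "P = cellC v S" "P \<noteq> {}" "bounded P"
    using assms(2) unfolding tconv_cell_def covector_cell_def by blast
  with bounded_cellC_covers[OF assms(1)] show ?thesis
    using ex_weights_FW_eq_cellC by metis
qed

section \<open>Fermat-Weber sets are bounded cells\<close>

lemma midpoint_nth: "midpoint x y $ k = (x $ k + y $ k) / (2::real)"
  unfolding midpoint_def by simp

lemma midpoint_mem_Hspace: "x \<in> Hspace \<Longrightarrow> y \<in> Hspace \<Longrightarrow> midpoint x y \<in> Hspace"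
  unfolding mem_Hspace_iff midpoint_nth by (simp add: sum.distrib flip: sum_divide_distrib)

lemma maxdiff_midpoint_le: "maxdiff (midpoint x y) z \<le> (maxdiff x z + maxdiff y z) / 2"
proof -
  obtain k where "midpoint x y $ k - z $ k = maxdiff (midpoint x y) z" by (rule maxdiff_attained)
  then show ?thesis using maxdiff_ge[of x k z] maxdiff_ge[of y k z] unfolding midpoint_nth by argo
qed

lemma covec_midpoint:
  assumes "maxdiff (midpoint x y) (v i) = (maxdiff x (v i) + maxdiff y (v i)) / 2"
  shows "covec v (midpoint x y) i = covec v x i \<inter> covec v y i"
proof (rule set_eqI)
  fix l
  have "midpoint x y $ l - v i $ l = ((x $ l - v i $ l) + (y $ l - v i $ l)) / 2"
    by (simp add: midpoint_nth field_simps)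
  moreover have "x $ l - v i $ l \<le> maxdiff x (v i)" "y $ l - v i $ l \<le> maxdiff y (v i)"
    by (rule maxdiff_ge)+
  ultimately show "l \<in> covec v (midpoint x y) i \<longleftrightarrow> l \<in> covec v x i \<inter> covec v y i"
    using assms unfolding Int_iff mem_covec_iff by argo
qed

text \<open>Moving from \<open>z\<close> away from \<open>y\<close> keeps the covector of \<open>z\<close> for a short while: no new
  maximum appears near \<open>z\<close>, and the maxima shared by \<open>z\<close> and \<open>y\<close> move in parallel.\<close>
lemma extension_keeps_covec:
  fixes v :: "'m::finite \<Rightarrow> real^'n"
  assumes zy: "\<And>i. covec v z i \<subseteq> covec v y i"
  shows "\<exists>t>0. \<forall>i. covec v z i \<subseteq> covec v (z + t *\<^sub>R (z - y)) i"
proof -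
  have "((\<lambda>t. z + t *\<^sub>R (z - y)) \<longlongrightarrow> z) (at_right 0)"
    by (auto intro!: tendsto_eq_intros)
  then have "\<forall>\<^sub>F t in at_right 0. \<forall>i. covec v (z + t *\<^sub>R (z - y)) i \<subseteq> covec v z i"
    by (intro eventually_all_finite eventually_compose_filterlim[OF eventually_covec_subset])
  with eventually_at_right_less
  have "\<forall>\<^sub>F t in at_right 0. 0 < t \<and> (\<forall>i. covec v (z + t *\<^sub>R (z - y)) i \<subseteq> covec v z i)"
    by (rule eventually_conj)
  then obtain t :: real where t: "0 < t" and near: "\<And>i. covec v (z + t *\<^sub>R (z - y)) i \<subseteq> covec v z i"
    using eventually_happens'[OF trivial_limit_at_right_real] by blast
  define x where "x = z + t *\<^sub>R (z - y)"
  have x_nth: "x $ l - v i $ l = (1 + t) * (z $ l - v i $ l) - t * (y $ l - v i $ l)" for i l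
    unfolding x_def by (simp add: algebra_simps)
  have "covec v z i \<subseteq> covec v x i" for i
  proof
    fix l assume l: "l \<in> covec v z i"
    obtain k where k: "k \<in> covec v x i" using covec_nonempty[of v x i] by blast
    have "k \<in> covec v z i" using k near unfolding x_def by blast
    moreover have "k \<in> covec v y i" "l \<in> covec v y i" using \<open>k \<in> covec v z i\<close> l zy by blast+
    ultimately have "x $ l - v i $ l = x $ k - v i $ k"
      using l unfolding x_nth by (simp add: mem_covec_iff)
    then show "l \<in> covec v x i" using k by (simp add: mem_covec_iff)
  qed
  with t show ?thesis unfolding x_def by blast
qed

context
  fixes v :: "'m::finite \<Rightarrow> real^'n" and w :: "'m \<Rightarrow> real"
  assumes w_pos: "\<And>i. 0 < w i"
begin

lemma FW_cost_coercive:
  assumes "y \<in> Hspace"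
  shows "(\<Sum>i\<in>UNIV. w i) * norm y
    \<le> 2 * real CARD('n) * (FW_cost v w y + (\<Sum>i\<in>UNIV. w i * maxdiff (v i) 0))"
proof -
  have "(\<Sum>i\<in>UNIV. w i) * maxdiff y 0 \<le> (\<Sum>i\<in>UNIV. w i * (maxdiff y (v i) + maxdiff (v i) 0))"
    unfolding sum_distrib_right
    by (intro sum_mono mult_left_mono maxdiff_triangle) (use w_pos in \<open>simp add: less_imp_le\<close>)
  then have "(\<Sum>i\<in>UNIV. w i) * maxdiff y 0 \<le> FW_cost v w y + (\<Sum>i\<in>UNIV. w i * maxdiff (v i) 0)"
    unfolding FW_cost_def by (simp add: distrib_left sum.distrib)
  moreover have "0 \<le> (\<Sum>i\<in>UNIV. w i)" using w_pos by (simp add: sum_nonneg less_imp_le)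
  ultimately show ?thesis
    using mult_left_mono[OF norm_le_maxdiff_zero[OF assms]]
    by (smt (verit) mult.assoc mult.left_commute mult_left_mono of_nat_0_le_iff)
qed

lemma bounded_FW_cost_sublevel: "bounded {y \<in> Hspace. FW_cost v w y \<le> c}"
proof -
  define W where "W = (\<Sum>i\<in>UNIV. w i)"
  define C where "C = (\<Sum>i\<in>UNIV. w i * maxdiff (v i) 0)"
  have W: "0 < W" unfolding W_def using w_pos by (simp add: sum_pos)
  have "norm y \<le> 2 * real CARD('n) * (c + C) / W"
    if "y \<in> Hspace" "FW_cost v w y \<le> c" for y
  proof -
    have "2 * real CARD('n) * (FW_cost v w y + C) \<le> 2 * real CARD('n) * (c + C)"
      using that(2) by (intro mult_left_mono) auto
    then have "W * norm y \<le> 2 * real CARD('n) * (c + C)"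
      using FW_cost_coercive[OF that(1)] unfolding W_def C_def by linarith
    then show ?thesis using W by (simp add: pos_le_divide_eq mult.commute)
  qed
  then show ?thesis unfolding bounded_iff by blast
qed

lemma FW_subset_sublevel: "FW v w \<subseteq> {y \<in> Hspace. FW_cost v w y \<le> FW_cost v w 0}"
  unfolding FW_eq_argmin by (auto simp: mem_Hspace_iff)

lemma bounded_FW: "bounded (FW v w)"
  using bounded_FW_cost_sublevel FW_subset_sublevel by (rule bounded_subset)

lemma FW_nonempty: "FW v w \<noteq> {}"
proof -
  define K where "K = {y \<in> Hspace. FW_cost v w y \<le> FW_cost v w 0}"
  have "compact K"
  proof (rule compact_eq_bounded_closed[THEN iffD2, OF conjI])
    show "bounded K" unfolding K_def by (rule bounded_FW_cost_sublevel)
    have "closed {y. FW_cost v w y \<le> FW_cost v w 0}"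
      by (intro closed_Collect_le continuous_on_FW_cost continuous_on_const)
    with closed_Hspace show "closed K"
      unfolding K_def Collect_conj_eq Collect_mem_eq by (rule closed_Int)
  qed
  moreover have "0 \<in> K" unfolding K_def by (simp add: mem_Hspace_iff)
  ultimately obtain z where z: "z \<in> K" and min: "\<And>y. y \<in> K \<Longrightarrow> FW_cost v w z \<le> FW_cost v w y"
    using continuous_attains_inf[of K "FW_cost v w"]
      continuous_on_subset[OF continuous_on_FW_cost subset_UNIV] by blast
  have "FW_cost v w z \<le> FW_cost v w y" if "y \<in> Hspace" for y
    using min[of y] min[OF \<open>0 \<in> K\<close>] that unfolding K_def by force
  then have "z \<in> FW v w" using z unfolding FW_eq_argmin K_def by blast
  then show ?thesis by blast
qed

text \<open>Each term of the cost is midpoint convex and the weights are positive, so at the midpoint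
  of two minimisers every term is the average of its values at the endpoints.\<close>
lemma midpoint_FW:
  assumes x: "x \<in> FW v w" and y: "y \<in> FW v w"
  shows "midpoint x y \<in> FW v w"
    and "covec v (midpoint x y) i = covec v x i \<inter> covec v y i"
proof -
  define m where "m = midpoint x y"
  define gap where "gap i = (maxdiff x (v i) + maxdiff y (v i)) / 2 - maxdiff m (v i)" for i
  have gap_nonneg: "0 \<le> w i * gap i" for i
    unfolding gap_def m_def using w_pos[of i] maxdiff_midpoint_le[of x y "v i"] by simp
  have xH: "x \<in> Hspace" and yH: "y \<in> Hspace" and mH: "m \<in> Hspace"
    using x y midpoint_mem_Hspace unfolding FW_eq_argmin m_def by auto
  have cost_xy: "FW_cost v w x = FW_cost v w y" and cost_xm: "FW_cost v w x \<le> FW_cost v w m"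
    using x y xH yH mH unfolding FW_eq_argmin by (auto intro: antisym)
  have gap_sum: "(\<Sum>i\<in>UNIV. w i * gap i) = (FW_cost v w x + FW_cost v w y) / 2 - FW_cost v w m"
    unfolding gap_def FW_cost_def
    by (simp add: algebra_simps sum_subtractf sum.distrib flip: sum_divide_distrib)
  moreover have "0 \<le> (\<Sum>i\<in>UNIV. w i * gap i)" using gap_nonneg by (rule sum_nonneg)
  ultimately have cost_m: "FW_cost v w m = FW_cost v w x" using cost_xy cost_xm by argo
  then have "(\<Sum>i\<in>UNIV. w i * gap i) = 0" using gap_sum cost_xy by simp
  then have "w i * gap i = 0" using gap_nonneg by (simp add: sum_nonneg_eq_0_iff)
  then have "gap i = 0" using w_pos[of i] by simp
  then show "covec v (midpoint x y) i = covec v x i \<inter> covec v y i"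
    unfolding gap_def m_def by (intro covec_midpoint) simp
  show "midpoint x y \<in> FW v w"
    using x mH cost_m unfolding FW_eq_argmin m_def by auto
qed

text \<open>Take a minimiser with the fewest tight coordinates: averaging it with another minimiser
  intersects the covectors, so it cannot lose any.\<close>
lemma ex_FW_least_covec: "\<exists>z\<in>FW v w. \<forall>y\<in>FW v w. \<forall>i. covec v z i \<subseteq> covec v y i"
proof -
  define \<mu> where "\<mu> x = (\<Sum>i\<in>UNIV. card (covec v x i))" for x
  obtain z where z: "z \<in> FW v w" and z_min: "\<And>y. y \<in> FW v w \<Longrightarrow> \<mu> z \<le> \<mu> y"
    using FW_nonempty ex_has_least_nat[of "\<lambda>x. x \<in> FW v w" _ \<mu>] by blast
  have "covec v z i \<subseteq> covec v y i" if y: "y \<in> FW v w" for y i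
  proof (rule ccontr)
    assume not_sub: "\<not> covec v z i \<subseteq> covec v y i"
    have "\<mu> (midpoint z y) < \<mu> z" unfolding \<mu>_def midpoint_FW(2)[OF z y]
    proof (rule sum_strict_mono_ex1)
      show "\<forall>j\<in>UNIV. card (covec v z j \<inter> covec v y j) \<le> card (covec v z j)"
        by (auto intro: card_mono)
      have "covec v z i \<inter> covec v y i \<subset> covec v z i" using not_sub by blast
      then show "\<exists>j\<in>UNIV. card (covec v z j \<inter> covec v y j) < card (covec v z j)"
        by (meson UNIV_I finite psubset_card_mono)
    qed simp
    then show False using z_min[OF midpoint_FW(1)[OF z y]] by simp
  qed
  with z show ?thesis by blast
qed

text \<open>The cost is affine on the cell of a minimiser \<open>z\<close>; since the cell extends a little
  beyond \<open>z\<close> in the direction away from any of its points, the cost is constant on it.\<close>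
lemma cellC_covec_subset_FW:
  assumes z: "z \<in> FW v w"
  shows "cellC v (covec v z) \<subseteq> FW v w"
proof
  fix y assume "y \<in> cellC v (covec v z)"
  then have yH: "y \<in> Hspace" and zy: "\<And>i. covec v z i \<subseteq> covec v y i"
    unfolding cellC_def by auto
  obtain t where t: "0 < t" and zx: "\<And>i. covec v z i \<subseteq> covec v (z + t *\<^sub>R (z - y)) i"
    using extension_keeps_covec[OF zy] by blast
  define x where "x = z + t *\<^sub>R (z - y)"
  have "z \<in> Hspace" using z FW_subset_Hspace by blast
  then have xH: "x \<in> Hspace"
    using yH unfolding x_def mem_Hspace_iff by (simp add: sum.distrib sum_subtractf flip: sum_distrib_left)
  have maxdiff_x: "maxdiff x (v i) = (1 + t) * maxdiff z (v i) - t * maxdiff y (v i)" for i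
  proof -
    obtain l where l: "l \<in> covec v z i" using covec_nonempty[of v z i] by blast
    then have "l \<in> covec v x i" "l \<in> covec v y i" using zx[of i] zy[of i] unfolding x_def by blast+
    with l show ?thesis unfolding mem_covec_iff x_def by (simp add: algebra_simps)
  qed
  have "FW_cost v w x = (\<Sum>i\<in>UNIV. (1 + t) * (w i * maxdiff z (v i)) - t * (w i * maxdiff y (v i)))"
    unfolding FW_cost_def maxdiff_x by (simp add: algebra_simps)
  also have "\<dots> = (1 + t) * FW_cost v w z - t * FW_cost v w y"
    unfolding FW_cost_def by (simp only: sum_subtractf sum_distrib_left)
  finally have "FW_cost v w x = (1 + t) * FW_cost v w z - t * FW_cost v w y" .
  moreover have "FW_cost v w z \<le> FW_cost v w x" using z xH unfolding FW_eq_argmin by blast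
  ultimately have "t * FW_cost v w y \<le> t * FW_cost v w z" by (simp add: algebra_simps)
  then have "FW_cost v w y \<le> FW_cost v w z" using t by simp
  then show "y \<in> FW v w" using z yH unfolding FW_eq_argmin by (auto intro: order_trans)
qed

lemma ex_FW_eq_cellC: "\<exists>T. (\<forall>i. T i \<noteq> {}) \<and> FW v w = cellC v T"
proof -
  obtain z where z: "z \<in> FW v w" and least: "\<forall>y\<in>FW v w. \<forall>i. covec v z i \<subseteq> covec v y i"
    using ex_FW_least_covec by blast
  have "FW v w \<subseteq> cellC v (covec v z)"
    using least FW_subset_Hspace unfolding cellC_def by blast
  moreover have "cellC v (covec v z) \<subseteq> FW v w" by (rule cellC_covec_subset_FW[OF z])
  ultimately have "FW v w = cellC v (covec v z)" by (rule equalityI)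
  then show ?thesis by (intro exI[of _ "covec v z"]) (simp add: covec_nonempty)
qed

lemma tconv_cell_FW: "tconv_cell v (FW v w)"
proof -
  obtain T where "\<forall>i. T i \<noteq> {}" "FW v w = cellC v T" using ex_FW_eq_cellC by blast
  then show ?thesis
    using FW_nonempty bounded_FW unfolding tconv_cell_def covector_cell_def by blast
qed

lemma FW_subset_tconv:
  assumes "CARD('n) \<ge> 2"
  shows "FW v w \<subseteq> tconv v"
proof
  obtain T where T: "FW v w = cellC v T" using ex_FW_eq_cellC by blast
  fix x assume x: "x \<in> FW v w"
  have "\<exists>i. j \<in> covec v x i" for j
  proof -
    have "bounded (cellC v T)" "cellC v T \<noteq> {}"
      using bounded_FW FW_nonempty unfolding T by simp_all
    then obtain i where "j \<in> T i" using bounded_cellC_covers[OF assms] by blast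
    then show ?thesis using x unfolding T cellC_def by blast
  qed
  moreover have "x \<in> Hspace" using x FW_subset_Hspace by blast
  ultimately show "x \<in> tconv v" by (rule mem_tconv_if_covered[rotated])
qed

end

theorem theorem1p1:
  fixes v :: "'m::finite \<Rightarrow> real^'n"
  assumes "CARD('n) \<ge> 2"
    and "\<And>i. v i \<in> Hspace"
  shows "(\<forall>w. (\<forall>i. w i > 0) \<longrightarrow> FW v w \<subseteq> tconv v \<and> tconv_cell v (FW v w))
       \<and> (\<forall>P. tconv_cell v P \<longrightarrow> (\<exists>w. (\<forall>i. w i > 0) \<and> FW v w = P))"
proof (intro conjI allI impI)
  fix w :: "'m \<Rightarrow> real"
  assume "\<forall>i. w i > 0"
  then have w_pos: "\<And>i. 0 < w i" by blast
  show "FW v w \<subseteq> tconv v" by (rule FW_subset_tconv[OF w_pos assms(1)])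
  show "tconv_cell v (FW v w)" by (rule tconv_cell_FW[OF w_pos])
next
  fix P
  assume "tconv_cell v P"
  then show "\<exists>w. (\<forall>i. w i > 0) \<and> FW v w = P" by (rule tconv_cell_eq_FW[OF assms(1)])
qed

end
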